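(* If $G$ is an appended star of order $n$, maximum degree $\Delta=3$ and diameter at least $8$, then $\gamma^{\rm ID}(G)\le \frac23 n=\left(\frac{\Delta-1}{\Delta}\right)n$.
   Context: An identifying code of a graph $G$ is a set $C\subseteq V(G)$ such that every vertex $v$ has $N[v]\cap C\neq\emptyset$ and for all distinct $u,v$, $N[u]\cap C \ne N[v]\cap C$, where $N[v]$ is the closed neighborhood; $\gamma^{\rm ID}(G)$ is its minimum size. A $k$-star is $K_{1,k}$. For a graph $G'$, a vertex $v$ of $G'$ and a star $S$, $G'\rhd_v S$ is the graph obtained from the disjoint union of $G'$ and $S$ by identifying $v$ with a leaf of $S$. An appended star is a graph $G_p$ obtained as follows: $G_0=S_0$ is a $\Delta_0$-star with $\Delta_0\ge3$, and for $i=1,\dots,p$, $G_i=G_{i-1}\rhd_{v_{i-1}}S_i$ where $S_i$ is a $\Delta_i$-star with $\Delta_i\ge 3$ and $v_{i-1}$ is a vertex of $G_{i-1}$. *)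

theory Defs
  imports Main
begin

type_synonym 'a graph = "'a set \<times> 'a set set"

definition verts :: "'a graph \<Rightarrow> 'a set" where "verts G = fst G"
definition edges :: "'a graph \<Rightarrow> 'a set set" where "edges G = snd G"

definition adj :: "'a graph \<Rightarrow> 'a \<Rightarrow> 'a \<Rightarrow> bool" where
  "adj G u v \<longleftrightarrow> {u, v} \<in> edges G \<and> u \<noteq> v"

definition open_nbhd :: "'a graph \<Rightarrow> 'a \<Rightarrow> 'a set" where
  "open_nbhd G v = {u \<in> verts G. adj G v u}"

definition closed_nbhd :: "'a graph \<Rightarrow> 'a \<Rightarrow> 'a set" where
  "closed_nbhd G v = insert v (open_nbhd G v)"

definition degree :: "'a graph \<Rightarrow> 'a \<Rightarrow> nat" where
  "degree G v = card (open_nbhd G v)"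

definition max_degree :: "'a graph \<Rightarrow> nat" where
  "max_degree G = Max (degree G ` verts G)"

definition adj_rel :: "'a graph \<Rightarrow> ('a \<times> 'a) set" where
  "adj_rel G = {(u, v). u \<in> verts G \<and> v \<in> verts G \<and> adj G u v}"

definition dist :: "'a graph \<Rightarrow> 'a \<Rightarrow> 'a \<Rightarrow> nat" where
  "dist G u v = (LEAST k. (u, v) \<in> (adj_rel G) ^^ k)"

definition diameter :: "'a graph \<Rightarrow> nat" where
  "diameter G = Max {dist G u v | u v. u \<in> verts G \<and> v \<in> verts G}"

definition is_identifying_code :: "'a graph \<Rightarrow> 'a set \<Rightarrow> bool" where
  "is_identifying_code G C \<longleftrightarrow> C \<subseteq> verts G
     \<and> (\<forall>v \<in> verts G. closed_nbhd G v \<inter> C \<noteq> {})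
     \<and> (\<forall>u \<in> verts G. \<forall>v \<in> verts G. u \<noteq> v \<longrightarrow> closed_nbhd G u \<inter> C \<noteq> closed_nbhd G v \<inter> C)"

definition gamma_ID :: "'a graph \<Rightarrow> nat" where
  "gamma_ID G = (LEAST k. \<exists>C. is_identifying_code G C \<and> card C = k)"

text \<open>In \<open>G' \<rhd>_v S\<close> the vertex \<open>v\<close> is identified with one leaf of \<open>S\<close>, so the new vertices
  are the centre \<open>c\<close> and the remaining \<open>k - 1\<close> leaves \<open>L\<close>, and the new edges join \<open>c\<close>
  to \<open>L \<union> {v}\<close>.\<close>
definition star_graph :: "'a \<Rightarrow> 'a set \<Rightarrow> 'a graph" where
  "star_graph c L = (insert c L, (\<lambda>x. {c, x}) ` L)"

inductive appended_star :: "'a graph \<Rightarrow> bool" where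
  base: "\<lbrakk> finite L; card L \<ge> 3; c \<notin> L \<rbrakk> \<Longrightarrow> appended_star (star_graph c L)"
| step: "\<lbrakk> appended_star G; v \<in> verts G; c \<notin> verts G; c \<notin> L; L \<inter> verts G = {};
           finite L; card (insert v L) \<ge> 3 \<rbrakk>
         \<Longrightarrow> appended_star (verts G \<union> insert c L, edges G \<union> (\<lambda>x. {c, x}) ` (insert v L))"

end

theory Submission
  imports Defs
begin

(*
  With maximum degree 3 every star of an appended star is a 3-star attached at a leaf that is
  not a centre. Hence G is a tree, bipartite between the set Z of centres, all of degree 3, and
  the remaining vertices W, with n = 3|Z| + 1 and |W| = 2|Z| + 1.

  Since the diameter is large there is a geodesic s1 i1 s2 i2 s3 i3 s4 starting at a centre.  Put
  S = {s1, s2, s3, s4} and R = {p1, p2, i2, p3, p4}, where p_k is a neighbour of s_k off the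
  geodesic.  The code (W - R) \<union> S has 2|Z| \<le> 2n/3 elements.  A centre outside S has at
  most one neighbour in R, since two would close a short cycle or shorten the geodesic, so its
  closed neighbourhood meets the code in two non-centres, a pair no other vertex is adjacent to;
  the vertices of R are told apart by their neighbours in S.
*)

lemma card_3_obtain:
  assumes "card A = 3" "a \<in> A"
  obtains b c where "A = {a, b, c}"
proof -
  have "card (A - {a}) = 2" using assms by simp
  then obtain b c where "A - {a} = {b, c}" by (meson card_2_iff)
  then show thesis using that assms(2) by blast
qed

lemma card_3_obtain2:
  assumes "card A = 3" "a \<in> A" "b \<in> A" "a \<noteq> b"
  obtains c where "A = {a, b, c}"
proof -
  have "card (A - {a, b}) = 1" using assms by (simp add: card_Diff_subset)
  then obtain c where "A - {a, b} = {c}" by (meson card_1_singletonE)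
  then show thesis using that assms(2,3) by blast
qed

lemma card_3_distinct: "card {a, b, c} = 3 \<Longrightarrow> distinct [a, b, c]"
  by (auto simp: card_insert_if split: if_splits)

lemma verts_pair [simp]: "verts (V, E) = V"
  and edges_pair [simp]: "edges (V, E) = E"
  by (simp_all add: verts_def edges_def)

lemma adj_sym: "adj G x y \<Longrightarrow> adj G y x"
  by (auto simp: adj_def insert_commute)

lemma adj_neq: "adj G x y \<Longrightarrow> x \<noteq> y"
  by (simp add: adj_def)

lemma verts_star_graph [simp]: "verts (star_graph c L) = insert c L"
  by (simp add: star_graph_def)

lemma adj_star_graph:
  "c \<notin> L \<Longrightarrow> adj (star_graph c L) x y \<longleftrightarrow> (x = c \<and> y \<in> L) \<or> (y = c \<and> x \<in> L)"
  by (auto simp: adj_def star_graph_def doubleton_eq_iff)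

abbreviation attach_star :: "'a graph \<Rightarrow> 'a \<Rightarrow> 'a \<Rightarrow> 'a set \<Rightarrow> 'a graph" where
  "attach_star G v c L \<equiv> (verts G \<union> insert c L, edges G \<union> (\<lambda>x. {c, x}) ` insert v L)"

lemma adj_attach_star:
  assumes "c \<notin> verts G" "c \<notin> L" "v \<in> verts G"
  shows "adj (attach_star G v c L) x y \<longleftrightarrow>
    adj G x y \<or> (x = c \<and> y \<in> insert v L) \<or> (y = c \<and> x \<in> insert v L)"
  using assms by (auto simp: adj_def doubleton_eq_iff)

lemma open_nbhd_attach_star_mono: "open_nbhd G x \<subseteq> open_nbhd (attach_star G v c L) x"
  by (auto simp: open_nbhd_def adj_def)

subsection \<open>Appended stars of \<open>3\<close>-stars\<close>

inductive appended_3star :: "'a graph \<Rightarrow> 'a set \<Rightarrow> bool" where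
  base: "\<lbrakk> finite L; card L = 3; c \<notin> L \<rbrakk> \<Longrightarrow> appended_3star (star_graph c L) {c}"
| step: "\<lbrakk> appended_3star G Z; v \<in> verts G; v \<notin> Z; c \<notin> verts G; c \<notin> L; L \<inter> verts G = {};
           finite L; card L = 2 \<rbrakk>
         \<Longrightarrow> appended_3star (attach_star G v c L) (insert c Z)"

lemma appended_3star_card:
  "appended_3star G Z \<Longrightarrow> finite (verts G) \<and> Z \<subseteq> verts G \<and> card (verts G) = 3 * card Z + 1"
proof (induction rule: appended_3star.induct)
  case (step G Z v c L)
  have "card (verts G \<union> insert c L) = card (verts G) + card (insert c L)"
    using step by (intro card_Un_disjoint) auto
  moreover have "card (insert c L) = 3" "card (insert c Z) = Suc (card Z)"
    using step by (auto intro: card_insert_disjoint finite_subset)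
  ultimately show ?case using step by (simp; blast)
qed simp

lemma appended_3star_edge:
  "appended_3star G Z \<Longrightarrow> e \<in> edges G \<Longrightarrow> \<exists>z w. e = {z, w} \<and> z \<in> Z \<and> w \<in> verts G - Z"
proof (induction arbitrary: e rule: appended_3star.induct)
  case (base L c)
  then show ?case by (auto simp: star_graph_def)
next
  case (step G Z v c L)
  show ?case
  proof (cases "e \<in> edges G")
    case True
    then obtain z w where "e = {z, w}" "z \<in> Z" "w \<in> verts G - Z"
      using step.IH by blast
    then show ?thesis using step.hyps(4) by (intro exI[of _ z] exI[of _ w]) auto
  next
    case False
    then obtain x where "x \<in> insert v L" "e = {c, x}"
      using step.prems by auto
    then show ?thesis using step.hyps appended_3star_card[OF step.hyps(1)]
      by (intro exI[of _ c] exI[of _ x]) auto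
  qed
qed

lemma appended_3star_adj:
  assumes "appended_3star G Z" "adj G x y"
  shows "x \<in> verts G \<and> y \<in> verts G \<and> (x \<in> Z \<longleftrightarrow> y \<notin> Z)"
proof -
  have "{x, y} \<in> edges G" using assms(2) by (simp add: adj_def)
  then obtain z w where "{x, y} = {z, w}" "z \<in> Z" "w \<in> verts G - Z"
    using appended_3star_edge[OF assms(1)] by blast
  then show ?thesis
    using appended_3star_card[OF assms(1)] adj_neq[OF assms(2)] by (auto simp: doubleton_eq_iff)
qed

lemma appended_3star_open_nbhd_attach_star_new_centre:
  assumes "appended_3star G Z" "v \<in> verts G" "c \<notin> verts G" "c \<notin> L"
  shows "open_nbhd (attach_star G v c L) c = insert v L"
proof (intro set_eqI)
  fix u
  have "\<not> adj G c u"
    using appended_3star_adj[OF assms(1), of c u] assms(3) by blast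
  then show "u \<in> open_nbhd (attach_star G v c L) c \<longleftrightarrow> u \<in> insert v L"
    using assms(2-4) unfolding open_nbhd_def adj_attach_star[OF assms(3,4,2)] by auto
qed

lemma appended_3star_open_nbhd_attach_star_old_centre:
  assumes "appended_3star G Z" "v \<in> verts G" "v \<notin> Z" "c \<notin> verts G" "c \<notin> L"
    "L \<inter> verts G = {}" "z \<in> Z"
  shows "open_nbhd (attach_star G v c L) z = open_nbhd G z"
proof (intro set_eqI)
  fix u
  have "z \<noteq> c" "z \<notin> insert v L"
    using assms appended_3star_card[OF assms(1)] by auto
  moreover have "adj G z u \<Longrightarrow> u \<in> verts G"
    using appended_3star_adj[OF assms(1), of z u] by blast
  ultimately show "u \<in> open_nbhd (attach_star G v c L) z \<longleftrightarrow> u \<in> open_nbhd G z"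
    unfolding open_nbhd_def adj_attach_star[OF assms(4,5,2)] by auto
qed

lemma appended_3star_degree_centre:
  "appended_3star G Z \<Longrightarrow> z \<in> Z \<Longrightarrow> card (open_nbhd G z) = 3"
proof (induction rule: appended_3star.induct)
  case (base L c)
  have "open_nbhd (star_graph c L) c = L"
    using base by (auto simp: open_nbhd_def adj_star_graph)
  then show ?case using base by simp
next
  case (step G Z v c L)
  show ?case
  proof (cases "z = c")
    case True
    have "v \<notin> L" using step.hyps(2,6) by blast
    then show ?thesis
      using appended_3star_open_nbhd_attach_star_new_centre[OF step.hyps(1,2,4,5)]
        step.hyps(7,8) True
      by simp
  next
    case False
    then have "z \<in> Z" using step.prems by simp
    then show ?thesis
      using appended_3star_open_nbhd_attach_star_old_centre[OF step.hyps(1-6)] step.IH by simp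
  qed
qed

lemma appended_3star_connected:
  "appended_3star G Z \<Longrightarrow> x \<in> verts G \<Longrightarrow> y \<in> verts G \<Longrightarrow> (x, y) \<in> (adj_rel G)\<^sup>*"
proof (induction arbitrary: x y rule: appended_3star.induct)
  case (base L c)
  have "(u, c) \<in> adj_rel (star_graph c L) \<and> (c, u) \<in> adj_rel (star_graph c L)" if "u \<in> L" for u
    using that base.hyps by (auto simp: adj_rel_def adj_star_graph)
  then have "(u, c) \<in> (adj_rel (star_graph c L))\<^sup>* \<and> (c, u) \<in> (adj_rel (star_graph c L))\<^sup>*"
    if "u \<in> insert c L" for u
    using that by blast
  then have "(x, c) \<in> (adj_rel (star_graph c L))\<^sup>*" "(c, y) \<in> (adj_rel (star_graph c L))\<^sup>*"
    using base.prems by simp_all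
  then show ?case by (rule rtrancl_trans)
next
  case (step G Z v c L)
  let ?R = "adj_rel (attach_star G v c L)"
  have sub: "(adj_rel G)\<^sup>* \<subseteq> ?R\<^sup>*"
    by (rule rtrancl_mono)
      (auto simp only: adj_rel_def adj_attach_star[OF step.hyps(4,5,2)] verts_pair)
  have "(c, u) \<in> ?R \<and> (u, c) \<in> ?R" if "u \<in> insert v L" for u
    using that step.hyps unfolding adj_rel_def adj_attach_star[OF step.hyps(4,5,2)] by auto
  then have cv: "(c, v) \<in> ?R" "(v, c) \<in> ?R" and cl: "u \<in> L \<Longrightarrow> (c, u) \<in> ?R \<and> (u, c) \<in> ?R" for u
    by auto
  have "(u, v) \<in> ?R\<^sup>* \<and> (v, u) \<in> ?R\<^sup>*" if "u \<in> insert c L" for u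
  proof (cases "u = c")
    case False
    then have "(u, c) \<in> ?R" "(c, u) \<in> ?R" using cl that by auto
    then show ?thesis using cv by (meson converse_rtrancl_into_rtrancl r_into_rtrancl)
  qed (use cv in auto)
  moreover have "(u, v) \<in> ?R\<^sup>* \<and> (v, u) \<in> ?R\<^sup>*" if "u \<in> verts G" for u
    using that step.IH[of u v] step.IH[of v u] step.hyps(2) sub by blast
  ultimately have to_v: "(u, v) \<in> ?R\<^sup>* \<and> (v, u) \<in> ?R\<^sup>*" if "u \<in> verts (attach_star G v c L)" for u
    using that by auto
  have "(x, v) \<in> ?R\<^sup>*" "(v, y) \<in> ?R\<^sup>*"
    using to_v[OF step.prems(1)] to_v[OF step.prems(2)] by simp_all
  then show ?case by (rule rtrancl_trans)
qed

lemma appended_3star_adj_rel: "appended_3star G Z \<Longrightarrow> adj G x y \<Longrightarrow> (x, y) \<in> adj_rel G"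
  using appended_3star_adj[of G Z x y] by (simp add: adj_rel_def)

lemma appended_3star_in_open_nbhd:
  "appended_3star G Z \<Longrightarrow> y \<in> open_nbhd G x \<longleftrightarrow> adj G x y"
  using appended_3star_adj[of G Z x y] by (auto simp: open_nbhd_def)

lemma appended_3star_closed_nbhd_same_side:
  "appended_3star G Z \<Longrightarrow> y \<in> closed_nbhd G x \<Longrightarrow> (x \<in> Z \<longleftrightarrow> y \<in> Z) \<Longrightarrow> y = x"
  using appended_3star_adj[of G Z x y] by (auto simp: closed_nbhd_def open_nbhd_def)

subsection \<open>Maximum degree three forces \<open>3\<close>-stars\<close>

lemma finite_verts_appended_star: "appended_star G \<Longrightarrow> finite (verts G)"
  by (induction rule: appended_star.induct) (auto simp: star_graph_def)

lemma degree_le_max_degree: "finite (verts G) \<Longrightarrow> x \<in> verts G \<Longrightarrow> degree G x \<le> max_degree G"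
  unfolding max_degree_def by simp

lemma max_degree_le_attach_star:
  assumes "finite (verts G)" "finite L" "verts G \<noteq> {}"
  shows "max_degree G \<le> max_degree (attach_star G v c L)"
proof -
  have "degree G x \<le> max_degree (attach_star G v c L)" if "x \<in> verts G" for x
  proof -
    have "finite (open_nbhd (attach_star G v c L) x)"
      using assms by (simp add: open_nbhd_def)
    then have "degree G x \<le> degree (attach_star G v c L) x"
      unfolding degree_def by (rule card_mono) (rule open_nbhd_attach_star_mono)
    also have "\<dots> \<le> max_degree (attach_star G v c L)"
      using assms that by (intro degree_le_max_degree) auto
    finally show ?thesis .
  qed
  then show ?thesis
    using assms unfolding max_degree_def[of G] by (simp add: Max_le_iff)
qed

lemma appended_3star_degree_attach_at_centre:
  assumes tree: "appended_3star G Z" and "v \<in> Z" "c \<notin> verts G" "c \<notin> L" "finite L"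
  shows "4 \<le> degree (attach_star G v c L) v"
proof -
  have fin: "finite (verts G)" and v: "v \<in> verts G"
    using appended_3star_card[OF tree] assms(2) by auto
  have "c \<notin> open_nbhd G v" "finite (open_nbhd G v)"
    using fin assms(3) by (auto simp: open_nbhd_def)
  then have "card (insert c (open_nbhd G v)) = 4"
    using appended_3star_degree_centre[OF tree assms(2)] by simp
  moreover have "c \<in> open_nbhd (attach_star G v c L) v"
    unfolding open_nbhd_def adj_attach_star[OF assms(3,4) v] by simp
  then have "insert c (open_nbhd G v) \<subseteq> open_nbhd (attach_star G v c L) v"
    using open_nbhd_attach_star_mono[where x = v and v = v and c = c and L = L] by blast
  then have "card (insert c (open_nbhd G v)) \<le> degree (attach_star G v c L) v"
    unfolding degree_def using fin assms(5) by (intro card_mono) (auto simp: open_nbhd_def)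
  ultimately show ?thesis by simp
qed

lemma appended_star_max_degree_3:
  "appended_star G \<Longrightarrow> max_degree G \<le> 3 \<Longrightarrow> \<exists>Z. appended_3star G Z"
proof (induction rule: appended_star.induct)
  case (base L c)
  have "open_nbhd (star_graph c L) c = L"
    using base.hyps by (auto simp: open_nbhd_def adj_star_graph)
  then have "card L \<le> max_degree (star_graph c L)"
    using degree_le_max_degree[of "star_graph c L" c] base.hyps by (simp add: degree_def)
  then have "card L = 3" using base by linarith
  then have "appended_3star (star_graph c L) {c}"
    using base.hyps by (intro appended_3star.base)
  then show ?case ..
next
  case (step G v c L)
  let ?G' = "attach_star G v c L"
  have fin: "finite (verts G)" using finite_verts_appended_star[OF step.hyps(1)] .
  have deg: "degree ?G' x \<le> 3" if "x \<in> verts ?G'" for x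
    using degree_le_max_degree[of ?G' x] fin step that by simp
  have "verts G \<noteq> {}" using step.hyps(2) by blast
  then have "max_degree G \<le> 3"
    using max_degree_le_attach_star[OF fin step.hyps(6), where v = v and c = c] step.prems
    by (meson le_trans)
  then obtain Z where tree: "appended_3star G Z" using step.IH by blast
  have "card (insert v L) = degree ?G' c"
    using appended_3star_open_nbhd_attach_star_new_centre[OF tree step.hyps(2-4)]
    by (simp add: degree_def)
  also have "\<dots> \<le> 3" using deg by simp
  finally have "card L = 2"
    using step.hyps(2,5,6,7) by (auto simp: card_insert_if split: if_splits)
  moreover have "v \<notin> Z"
  proof
    assume "v \<in> Z"
    then have "4 \<le> degree ?G' v"
      using appended_3star_degree_attach_at_centre[OF tree _ step.hyps(3,4,6)] by blast
    then show False using deg[of v] step.hyps(2) by simp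
  qed
  ultimately have "appended_3star ?G' (insert c Z)"
    using tree step.hyps by (intro appended_3star.step)
  then show ?case ..
qed

subsection \<open>Cycles\<close>

definition parent_ranking :: "'a graph \<Rightarrow> ('a \<Rightarrow> nat) \<Rightarrow> bool" where
  "parent_ranking G r \<longleftrightarrow> (\<forall>x y. adj G x y \<longrightarrow> r x \<noteq> r y) \<and>
     (\<forall>x y y'. adj G x y \<longrightarrow> adj G x y' \<longrightarrow> r y < r x \<longrightarrow> r y' < r x \<longrightarrow> y = y')"

lemma parent_ranking_star_graph:
  assumes "c \<notin> L"
  shows "parent_ranking (star_graph c L) (\<lambda>x. if x = c then 0 else 1)"
  using assms by (auto simp: parent_ranking_def adj_star_graph)

context
  fixes G :: "'a graph" and r :: "'a \<Rightarrow> nat" and v c :: 'a and L :: "'a set"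
  assumes r: "parent_ranking G r" and fin: "finite (verts G)"
    and in_verts: "\<And>x y. adj G x y \<Longrightarrow> x \<in> verts G \<and> y \<in> verts G"
    and v: "v \<in> verts G" and c: "c \<notin> verts G" "c \<notin> L" and L: "L \<inter> verts G = {}"
begin

definition attach_rank :: "'a \<Rightarrow> nat" where
  "attach_rank x =
    (if x \<in> verts G then r x
     else if x = c then Suc (Max (r ` verts G))
     else Suc (Suc (Max (r ` verts G))))"

lemma attach_rank_old: "x \<in> verts G \<Longrightarrow> attach_rank x = r x"
  and attach_rank_old_less: "x \<in> verts G \<Longrightarrow> attach_rank x < attach_rank c"
  and attach_rank_leaf: "x \<in> L \<Longrightarrow> attach_rank x = Suc (attach_rank c)"
  using fin c L by (auto simp: attach_rank_def le_imp_less_Suc)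

lemma attach_rank_centre_neq: "u \<in> insert v L \<Longrightarrow> attach_rank c \<noteq> attach_rank u"
  using attach_rank_old_less[OF v] attach_rank_leaf[of u] by (cases "u = v") simp_all

lemma attach_rank_adj_neq:
  assumes "adj (attach_star G v c L) x y"
  shows "attach_rank x \<noteq> attach_rank y"
proof -
  consider "adj G x y" | "x = c" "y \<in> insert v L" | "y = c" "x \<in> insert v L"
    using assms unfolding adj_attach_star[OF c v] by blast
  then show ?thesis
  proof cases
    case 1
    then show ?thesis using r in_verts[OF 1] attach_rank_old by (simp add: parent_ranking_def)
  next
    case 2
    then show ?thesis using attach_rank_centre_neq by simp
  next
    case 3
    then show ?thesis using attach_rank_centre_neq by metis
  qed
qed

lemma attach_rank_lower_nbr:
  assumes "adj (attach_star G v c L) x y" "attach_rank y < attach_rank x"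
  shows "(x \<in> verts G \<and> adj G x y) \<or> (x = c \<and> y = v) \<or> (x \<in> L \<and> y = c)"
proof -
  consider "adj G x y" | "x = c" "y \<in> insert v L" | "y = c" "x \<in> insert v L"
    using assms(1) unfolding adj_attach_star[OF c v] by blast
  then show ?thesis
  proof cases
    case 1
    then show ?thesis using in_verts by blast
  next
    case 2
    then show ?thesis using assms(2) attach_rank_leaf by auto
  next
    case 3
    then show ?thesis using assms(2) attach_rank_old_less[OF v] by auto
  qed
qed

lemma parent_ranking_attach_star: "parent_ranking (attach_star G v c L) attach_rank"
proof -
  have "y = y'"
    if "adj (attach_star G v c L) x y" "adj (attach_star G v c L) x y'"
      "attach_rank y < attach_rank x" "attach_rank y' < attach_rank x" for x y y'
  proof (cases "x \<in> verts G")
    case True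
    then have "adj G x y" "adj G x y'"
      using attach_rank_lower_nbr[OF that(1,3)] attach_rank_lower_nbr[OF that(2,4)] c L by auto
    moreover have "r y < r x" "r y' < r x"
      using that(3,4) attach_rank_old True in_verts[OF calculation(1)] in_verts[OF calculation(2)]
      by auto
    ultimately show ?thesis using r by (auto simp: parent_ranking_def)
  next
    case False
    then show ?thesis
      using attach_rank_lower_nbr[OF that(1,3)] attach_rank_lower_nbr[OF that(2,4)] c(2) by auto
  qed
  then show ?thesis unfolding parent_ranking_def using attach_rank_adj_neq by blast
qed

end

lemma appended_3star_parent_ranking: "appended_3star G Z \<Longrightarrow> \<exists>r. parent_ranking G r"
proof (induction rule: appended_3star.induct)
  case (base L c)
  show ?case using parent_ranking_star_graph[OF base.hyps(3)] by blast
next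
  case (step G Z v c L)
  then obtain r where "parent_ranking G r" by blast
  moreover have "finite (verts G)" using appended_3star_card[OF step.hyps(1)] by blast
  moreover have "adj G x y \<Longrightarrow> x \<in> verts G \<and> y \<in> verts G" for x y
    using appended_3star_adj[OF step.hyps(1), of x y] by blast
  ultimately have "parent_ranking (attach_star G v c L) (attach_rank G r c)"
    by (rule parent_ranking_attach_star) (use step.hyps in auto)
  then show ?case by blast
qed

definition is_cycle :: "'a graph \<Rightarrow> 'a list \<Rightarrow> bool" where
  "is_cycle G xs \<longleftrightarrow> distinct xs \<and> 3 \<le> length xs \<and> successively (adj G) xs \<and> adj G (last xs) (hd xs)"

lemma is_cycle_adj_nth:
  assumes "is_cycle G xs" "i < length xs"
  shows "adj G (xs ! i) (xs ! (Suc i mod length xs))"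
proof (cases "Suc i < length xs")
  case True
  then show ?thesis using assms(1) by (simp add: is_cycle_def successively_nth)
next
  case False
  then have "i = length xs - 1" "xs \<noteq> []" using assms(2) by auto
  then show ?thesis
    using assms(1) by (simp add: is_cycle_def last_conv_nth hd_conv_nth)
qed

text \<open>On a cycle, the vertex of largest rank would have two parents.\<close>
lemma parent_ranking_no_cycle:
  assumes r: "parent_ranking G r"
  shows "\<not> is_cycle G xs"
proof
  assume cyc: "is_cycle G xs"
  let ?n = "length xs"
  have n: "3 \<le> ?n" using cyc by (simp add: is_cycle_def)
  obtain m where m: "m < ?n" "r (xs ! m) = Max ((\<lambda>i. r (xs ! i)) ` {..<?n})"
    using Max_in[of "(\<lambda>i. r (xs ! i)) ` {..<?n}"] n by fastforce
  have max: "r (xs ! i) \<le> r (xs ! m)" if "i < ?n" for i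
    using m(2) that by simp
  define a where "a = Suc m mod ?n"
  define b where "b = (if m = 0 then ?n - 1 else m - 1)"
  have a: "a < ?n" "a \<noteq> m" and b: "b < ?n" "b \<noteq> m" "Suc b mod ?n = m"
    using n m(1) by (auto simp: a_def b_def mod_Suc)
  have "a \<noteq> b"
    using n m(1) by (auto simp: a_def b_def mod_Suc)
  have "adj G (xs ! m) (xs ! a)" "adj G (xs ! m) (xs ! b)"
    using is_cycle_adj_nth[OF cyc m(1)] adj_sym[OF is_cycle_adj_nth[OF cyc b(1)]]
    by (simp_all add: a_def b(3))
  moreover have "r (xs ! a) < r (xs ! m)" "r (xs ! b) < r (xs ! m)"
    using calculation max[OF a(1)] max[OF b(1)] r unfolding parent_ranking_def
    by (metis le_neq_implies_less)+
  ultimately have "xs ! a = xs ! b"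
    using r by (auto simp: parent_ranking_def)
  then show False
    using cyc a(1) b(1) \<open>a \<noteq> b\<close> by (simp add: is_cycle_def nth_eq_iff_index_eq)
qed

lemma appended_3star_no_cycle: "appended_3star G Z \<Longrightarrow> \<not> is_cycle G xs"
  using appended_3star_parent_ranking parent_ranking_no_cycle by blast

lemma appended_3star_common_nbr_unique:
  assumes "appended_3star G Z" "x \<noteq> y" "adj G x a" "adj G y a" "adj G x b" "adj G y b"
  shows "a = b"
proof (rule ccontr)
  assume "a \<noteq> b"
  then have "is_cycle G [x, a, y, b]"
    using assms(2-) adj_neq[of G] adj_sym[of G] by (auto simp: is_cycle_def)
  then show False using appended_3star_no_cycle[OF assms(1)] by blast
qed

subsection \<open>Geodesics\<close>

definition geodesic :: "'a graph \<Rightarrow> 'a list \<Rightarrow> bool" where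
  "geodesic G xs \<longleftrightarrow> successively (adj G) xs \<and>
     (\<forall>i j m. i \<le> j \<longrightarrow> j < length xs \<longrightarrow> (xs ! i, xs ! j) \<in> adj_rel G ^^ m \<longrightarrow> j - i \<le> m)"

lemma geodesic_no_shortcut:
  "geodesic G xs \<Longrightarrow> i \<le> j \<Longrightarrow> j < length xs \<Longrightarrow> (xs ! i, xs ! j) \<in> adj_rel G ^^ m \<Longrightarrow> j - i \<le> m"
  by (simp add: geodesic_def)

lemma geodesic_take_drop:
  assumes "geodesic G xs"
  shows "geodesic G (take n (drop k xs))"
  unfolding geodesic_def successively_conv_nth
proof (intro conjI allI impI)
  fix i assume i: "Suc i < length (take n (drop k xs))"
  have "successively (adj G) xs" using assms by (simp add: geodesic_def)
  moreover have "Suc (k + i) < length xs" using i by auto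
  ultimately have "adj G (xs ! (k + i)) (xs ! Suc (k + i))" by (rule successively_nth)
  then show "adj G (take n (drop k xs) ! i) (take n (drop k xs) ! Suc i)"
    using i by auto
next
  fix i j m
  assume "i \<le> j" "j < length (take n (drop k xs))"
    "(take n (drop k xs) ! i, take n (drop k xs) ! j) \<in> adj_rel G ^^ m"
  then show "j - i \<le> m"
    using geodesic_no_shortcut[OF assms, of "k + i" "k + j" m] by auto
qed

lemma shortest_walk_geodesic:
  assumes walk: "(u, v) \<in> adj_rel G ^^ d"
    and shortest: "\<And>k. k < d \<Longrightarrow> (u, v) \<notin> adj_rel G ^^ k"
  shows "\<exists>xs. geodesic G xs \<and> length xs = Suc d"
proof -
  let ?R = "adj_rel G"
  obtain f where f: "f 0 = u" "f d = v" "\<forall>i<d. (f i, f (Suc i)) \<in> ?R"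
    using walk relpow_fun_conv by metis
  have prefix: "(u, f i) \<in> ?R ^^ i" if "i \<le> d" for i
    unfolding relpow_fun_conv using f that by (intro exI[of _ f]) auto
  have suffix: "(f j, v) \<in> ?R ^^ (d - j)" if "j \<le> d" for j
    unfolding relpow_fun_conv using f that by (intro exI[of _ "\<lambda>t. f (j + t)"]) auto
  have no_shortcut: "j - i \<le> m" if "i \<le> j" "j \<le> d" "(f i, f j) \<in> ?R ^^ m" for i j m
  proof (rule ccontr)
    assume "\<not> j - i \<le> m"
    have "(u, v) \<in> ?R ^^ i O ?R ^^ m O ?R ^^ (d - j)"
      using prefix[of i] suffix[of j] that by auto
    then have "(u, v) \<in> ?R ^^ (i + m + (d - j))" by (simp add: relpow_add O_assoc)
    then show False using shortest \<open>\<not> j - i \<le> m\<close> that by simp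
  qed
  have "geodesic G (map f [0..<Suc d])"
    unfolding geodesic_def successively_conv_nth
    using f(3) no_shortcut by (auto simp: adj_rel_def nth_append simp del: upt_Suc)
  then show ?thesis by (intro exI[of _ "map f [0..<Suc d]"]) simp
qed

lemma diametral_geodesic:
  assumes fin: "finite (verts G)" and ne: "verts G \<noteq> {}"
    and conn: "\<And>x y. x \<in> verts G \<Longrightarrow> y \<in> verts G \<Longrightarrow> (x, y) \<in> (adj_rel G)\<^sup>*"
  shows "\<exists>xs. geodesic G xs \<and> length xs = Suc (diameter G)"
proof -
  let ?D = "{dist G u v | u v. u \<in> verts G \<and> v \<in> verts G}"
  have "?D = (\<lambda>(u, v). dist G u v) ` (verts G \<times> verts G)" by auto
  then have fin_D: "finite ?D" using fin by simp
  obtain w where "w \<in> verts G" using ne by blast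
  then have "dist G w w \<in> ?D" by blast
  then have "?D \<noteq> {}" by blast
  with fin_D have "Max ?D \<in> ?D" by (rule Max_in)
  then have "diameter G \<in> ?D" by (simp only: diameter_def)
  then obtain u v where uv: "u \<in> verts G" "v \<in> verts G" "diameter G = dist G u v"
    unfolding mem_Collect_eq by (elim exE conjE)
  have "\<exists>k. (u, v) \<in> adj_rel G ^^ k" using conn[OF uv(1,2)] rtrancl_power by blast
  then have "(u, v) \<in> adj_rel G ^^ dist G u v"
    unfolding dist_def by (rule LeastI_ex)
  moreover have "(u, v) \<notin> adj_rel G ^^ k" if "k < dist G u v" for k
    using not_less_Least that unfolding dist_def by blast
  ultimately show ?thesis unfolding uv(3) by (rule shortest_walk_geodesic)
qed

lemma successively_relpow:
  "successively (\<lambda>x y. (x, y) \<in> R) xs \<Longrightarrow> xs \<noteq> [] \<Longrightarrow> (hd xs, last xs) \<in> R ^^ (length xs - 1)"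
proof (induction xs rule: induct_list012)
  case (3 x y xs)
  have "(x, y) \<in> R" using "3.prems" by simp
  moreover have "(y, last (y # xs)) \<in> R ^^ length xs" using 3 by simp
  ultimately have "(x, last (y # xs)) \<in> R ^^ Suc (length xs)" by (rule relpow_Suc_I2)
  then show ?case by simp
qed auto

lemma geodesic_distinct:
  assumes "geodesic G xs"
  shows "distinct xs"
  unfolding distinct_conv_nth
proof (intro allI impI)
  have "xs ! i \<noteq> xs ! j" if "i < j" "j < length xs" for i j
    using geodesic_no_shortcut[OF assms, of i j 0] that by auto
  then show "xs ! i \<noteq> xs ! j" if "i < length xs" "j < length xs" "i \<noteq> j" for i j
    using that by (metis linorder_neqE_nat)
qed

lemma geodesic_not_adj:
  "geodesic G xs \<Longrightarrow> Suc i < j \<Longrightarrow> j < length xs \<Longrightarrow> (xs ! i, xs ! j) \<notin> adj_rel G"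
  using geodesic_no_shortcut[of G xs i j 1] by auto

lemma geodesic_no_common_nbr:
  assumes "geodesic G xs" "Suc (Suc i) < j" "j < length xs"
  shows "(xs ! i, x) \<notin> adj_rel G \<or> (x, xs ! j) \<notin> adj_rel G"
proof -
  have "(xs ! i, xs ! j) \<notin> adj_rel G ^^ 2"
    using geodesic_no_shortcut[OF assms(1), of i j 2] assms(2,3) by auto
  then show ?thesis by (auto simp: numeral_2_eq_2 intro: relpow_Suc_I2)
qed

lemma appended_3star_geodesic_from_centre:
  assumes tree: "appended_3star G Z" and geo: "geodesic G xs" and len: "8 \<le> length xs"
  obtains s1 i1 s2 i2 s3 i3 s4 where "geodesic G [s1, i1, s2, i2, s3, i3, s4]" "s1 \<in> Z"
proof -
  define k where "k = (if xs ! 0 \<in> Z then 0 else 1 :: nat)"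
  have "successively (adj G) xs" using geo by (simp add: geodesic_def)
  then have "adj G (xs ! 0) (xs ! 1)" using len successively_nth[of "adj G" xs 0] by simp
  then have "xs ! k \<in> Z" using appended_3star_adj[OF tree] by (auto simp: k_def)
  let ?ys = "take 7 (drop k xs)"
  have "geodesic G ?ys" using geo by (rule geodesic_take_drop)
  moreover have "length ?ys = 7" "?ys ! 0 = xs ! k" using len by (auto simp: k_def)
  moreover have "\<exists>a b c d e f g. ys = [a, b, c, d, e, f, g]" if "length ys = 7" for ys :: "'a list"
    using that by (auto simp: length_Suc_conv numeral_eq_Suc)
  then obtain a b c d e f g where "?ys = [a, b, c, d, e, f, g]"
    using \<open>length ?ys = 7\<close> by blast
  ultimately show thesis using that \<open>xs ! k \<in> Z\<close> by auto
qed

subsection \<open>The identifying code\<close>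

locale star_tree_spine =
  fixes G :: "'a graph" and Z :: "'a set" and s1 i1 s2 i2 s3 i3 s4 :: 'a
  assumes star_tree: "appended_3star G Z"
    and spine: "geodesic G [s1, i1, s2, i2, s3, i3, s4]"
    and s1_centre: "s1 \<in> Z"
begin

lemma spine_adj:
  "adj G s1 i1" "adj G i1 s2" "adj G s2 i2" "adj G i2 s3" "adj G s3 i3" "adj G i3 s4"
  using spine by (simp_all add: geodesic_def)

lemma spine_sides:
  "i1 \<notin> Z" "s2 \<in> Z" "i2 \<notin> Z" "s3 \<in> Z" "i3 \<notin> Z" "s4 \<in> Z"
  using s1_centre spine_adj appended_3star_adj[OF star_tree] by meson+

lemma spine_distinct: "distinct [s1, i1, s2, i2, s3, i3, s4]"
  using geodesic_distinct[OF spine] .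

lemma spine_not_adj:
  "\<not> adj G s1 i2" "\<not> adj G s1 i3" "\<not> adj G s2 i3" "\<not> adj G i1 s3" "\<not> adj G i1 s4" "\<not> adj G i2 s4"
  using geodesic_not_adj[OF spine, of 0 3] geodesic_not_adj[OF spine, of 0 5]
    geodesic_not_adj[OF spine, of 2 5] geodesic_not_adj[OF spine, of 1 4]
    geodesic_not_adj[OF spine, of 1 6] geodesic_not_adj[OF spine, of 3 6]
    appended_3star_adj_rel[OF star_tree]
  by auto

lemma spine_no_common_nbr:
  "\<not> (adj G s1 x \<and> adj G x s3)" "\<not> (adj G s1 x \<and> adj G x s4)" "\<not> (adj G s2 x \<and> adj G x s4)"
  using geodesic_no_common_nbr[OF spine, of 0 4 x] geodesic_no_common_nbr[OF spine, of 0 6 x]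
    geodesic_no_common_nbr[OF spine, of 2 6 x] appended_3star_adj_rel[OF star_tree]
  by auto

lemma spine_ends_far: "(s1, s4) \<notin> adj_rel G ^^ 4"
  using geodesic_no_shortcut[OF spine, of 0 6 4] by auto

lemma spine_nbhds:
  obtains p1 q1 p2 p3 p4 q4 where
    "open_nbhd G s1 = {i1, p1, q1}" "open_nbhd G s2 = {i1, i2, p2}"
    "open_nbhd G s3 = {i2, i3, p3}" "open_nbhd G s4 = {i3, p4, q4}"
proof -
  note deg = appended_3star_degree_centre[OF star_tree]
  note nbr = appended_3star_in_open_nbhd[OF star_tree]
  have nbrs: "i1 \<in> open_nbhd G s1" "i1 \<in> open_nbhd G s2" "i2 \<in> open_nbhd G s2"
    "i2 \<in> open_nbhd G s3" "i3 \<in> open_nbhd G s3" "i3 \<in> open_nbhd G s4"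
    using spine_adj adj_sym[OF spine_adj(2)] adj_sym[OF spine_adj(4)] adj_sym[OF spine_adj(6)]
    by (simp_all add: nbr)
  have neq: "i1 \<noteq> i2" "i2 \<noteq> i3" using spine_distinct by auto
  obtain p1 q1 where "open_nbhd G s1 = {i1, p1, q1}"
    using card_3_obtain[OF deg[OF s1_centre] nbrs(1)] .
  moreover obtain p2 where "open_nbhd G s2 = {i1, i2, p2}"
    using card_3_obtain2[OF deg[OF spine_sides(2)] nbrs(2,3) neq(1)] .
  moreover obtain p3 where "open_nbhd G s3 = {i2, i3, p3}"
    using card_3_obtain2[OF deg[OF spine_sides(4)] nbrs(4,5) neq(2)] .
  moreover obtain p4 q4 where "open_nbhd G s4 = {i3, p4, q4}"
    using card_3_obtain[OF deg[OF spine_sides(6)] nbrs(6)] .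
  ultimately show thesis by (rule that)
qed

end

locale star_tree_spine_nbhds = star_tree_spine +
  fixes p1 q1 p2 p3 p4 q4 :: 'a
  assumes nbhd_s1: "open_nbhd G s1 = {i1, p1, q1}"
    and nbhd_s2: "open_nbhd G s2 = {i1, i2, p2}"
    and nbhd_s3: "open_nbhd G s3 = {i2, i3, p3}"
    and nbhd_s4: "open_nbhd G s4 = {i3, p4, q4}"
begin

lemma nbhd_adj: "adj G s1 p1" "adj G s1 q1" "adj G s2 p2" "adj G s3 p3" "adj G s4 p4" "adj G s4 q4"
  by (simp_all add: appended_3star_in_open_nbhd[OF star_tree, symmetric]
      nbhd_s1 nbhd_s2 nbhd_s3 nbhd_s4)

lemmas config_edges = spine_adj spine_adj[THEN adj_sym] nbhd_adj nbhd_adj[THEN adj_sym]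

lemma nbhd_sides: "p1 \<notin> Z" "q1 \<notin> Z" "p2 \<notin> Z" "p3 \<notin> Z" "p4 \<notin> Z" "q4 \<notin> Z"
  using nbhd_adj s1_centre spine_sides appended_3star_adj[OF star_tree] by meson+

lemma config_verts:
  "s1 \<in> verts G" "s2 \<in> verts G" "s3 \<in> verts G" "s4 \<in> verts G"
  "i1 \<in> verts G" "i2 \<in> verts G" "i3 \<in> verts G"
  "p1 \<in> verts G" "q1 \<in> verts G" "p2 \<in> verts G" "p3 \<in> verts G" "p4 \<in> verts G" "q4 \<in> verts G"
  using config_edges appended_3star_adj[OF star_tree] by meson+

lemma nbhd_distinct: "distinct [i1, p1, q1]" "distinct [i1, i2, p2]" "distinct [i2, i3, p3]"
    "distinct [i3, p4, q4]"
  using appended_3star_degree_centre[OF star_tree] s1_centre spine_sides card_3_distinct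
    nbhd_s1 nbhd_s2 nbhd_s3 nbhd_s4
  by metis+

lemma config_distinct: "distinct [s1, i1, s2, i2, s3, i3, s4, p1, q1, p2, p3, p4, q4]"
proof -
  have "p1 \<noteq> i2" "q1 \<noteq> i2" "p1 \<noteq> i3" "q1 \<noteq> i3" "p2 \<noteq> i3" "p3 \<noteq> i1"
    "p4 \<noteq> i1" "q4 \<noteq> i1" "p4 \<noteq> i2" "q4 \<noteq> i2"
    using nbhd_adj spine_not_adj config_edges by metis+
  moreover have "p1 \<noteq> p3" "q1 \<noteq> p3" "p1 \<noteq> p4" "q1 \<noteq> p4" "p1 \<noteq> q4" "q1 \<noteq> q4"
    "p2 \<noteq> p4" "p2 \<noteq> q4"
    using spine_no_common_nbr config_edges by metis+
  moreover have "p1 \<noteq> p2" "q1 \<noteq> p2" "p2 \<noteq> p3" "p3 \<noteq> p4" "p3 \<noteq> q4"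
    using appended_3star_common_nbr_unique[OF star_tree] spine_distinct nbhd_distinct config_edges
    by (metis distinct_length_2_or_more)+
  ultimately show ?thesis
    using spine_distinct nbhd_distinct s1_centre spine_sides nbhd_sides by auto
qed

abbreviation S :: "'a set" where "S \<equiv> {s1, s2, s3, s4}"

abbreviation R :: "'a set" where "R \<equiv> {p1, p2, i2, p3, p4}"

lemma off_spine_centre_no_cycle:
  assumes z: "z \<in> Z" "z \<notin> S" and zx: "adj G z x" and zy: "adj G z y"
    and path: "successively (adj G) (x # ps @ [y])" "distinct (x # ps @ [y])"
    and in_config: "set (x # ps @ [y]) \<subseteq> set [s1, i1, s2, i2, s3, i3, s4, p1, q1, p2, p3, p4, q4]"
  shows False
proof -
  have "z \<notin> set (x # ps @ [y])"
    using in_config z s1_centre spine_sides nbhd_sides by auto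
  then have "is_cycle G (z # x # ps @ [y])"
    using zx adj_sym[OF zy] path by (simp add: is_cycle_def)
  then show False using appended_3star_no_cycle[OF star_tree] by blast
qed

lemma off_spine_centre_R_nbr_unique:
  assumes z: "z \<in> Z" "z \<notin> S" and ab: "a \<in> R" "b \<in> R" "adj G z a" "adj G z b"
  shows "a = b"
proof -
  note cycle = off_spine_centre_no_cycle[OF z]
  note config = config_edges config_distinct
  have "False" if "adj G z p1" "adj G z p2"
    by (rule cycle[OF that, of "[s1, i1, s2]"]) (use config in auto)
  moreover have "False" if "adj G z p1" "adj G z i2"
    by (rule cycle[OF that, of "[s1, i1, s2]"]) (use config in auto)
  moreover have "False" if "adj G z p1" "adj G z p3"
    by (rule cycle[OF that, of "[s1, i1, s2, i2, s3]"]) (use config in auto)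
  moreover have "False" if "adj G z p1" "adj G z p4"
  proof -
    have "successively (\<lambda>x y. (x, y) \<in> adj_rel G) [s1, p1, z, p4, s4]"
      using that adj_sym[OF that(1)] config_edges appended_3star_adj_rel[OF star_tree] by simp
    then show False using successively_relpow[of "adj_rel G" "[s1, p1, z, p4, s4]"] spine_ends_far
      by (simp add: numeral_eq_Suc)
  qed
  moreover have "False" if "adj G z p2" "adj G z i2"
    by (rule cycle[OF that, of "[s2]"]) (use config in auto)
  moreover have "False" if "adj G z p2" "adj G z p3"
    by (rule cycle[OF that, of "[s2, i2, s3]"]) (use config in auto)
  moreover have "False" if "adj G z p2" "adj G z p4"
    by (rule cycle[OF that, of "[s2, i2, s3, i3, s4]"]) (use config in auto)
  moreover have "False" if "adj G z i2" "adj G z p3"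
    by (rule cycle[OF that, of "[s3]"]) (use config in auto)
  moreover have "False" if "adj G z i2" "adj G z p4"
    by (rule cycle[OF that, of "[s3, i3, s4]"]) (use config in auto)
  moreover have "False" if "adj G z p3" "adj G z p4"
    by (rule cycle[OF that, of "[s3, i3, s4]"]) (use config in auto)
  ultimately show "a = b" using ab by blast
qed

lemma off_spine_centre_nbrs_outside_R:
  assumes "z \<in> Z" "z \<notin> S"
  obtains a b where "a \<noteq> b" "adj G z a" "adj G z b" "a \<notin> R" "b \<notin> R"
proof -
  obtain x y w where xyw: "open_nbhd G z = {x, y, w}" "x \<noteq> y" "y \<noteq> w" "x \<noteq> w"
    using appended_3star_degree_centre[OF star_tree assms(1)] unfolding card_3_iff by blast
  then have adj: "adj G z x" "adj G z y" "adj G z w"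
    by (simp_all add: appended_3star_in_open_nbhd[OF star_tree, symmetric])
  note unique = off_spine_centre_R_nbr_unique[OF assms]
  consider "x \<notin> R" "y \<notin> R" | "x \<notin> R" "w \<notin> R" | "y \<notin> R" "w \<notin> R"
    using unique[OF _ _ adj(1,2)] unique[OF _ _ adj(1,3)] unique[OF _ _ adj(2,3)] xyw(2-4)
    by metis
  then show thesis
    using that adj xyw(2-4) by cases metis+
qed

definition code :: "'a set" where
  "code = (verts G - Z - R) \<union> S"

lemma card_code: "3 * card code \<le> 2 * card (verts G)"
proof -
  have fin: "finite (verts G)" and Z: "Z \<subseteq> verts G" and card_V: "card (verts G) = 3 * card Z + 1"
    using appended_3star_card[OF star_tree] by auto
  have R: "R \<subseteq> verts G - Z" and S: "S \<subseteq> Z"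
    using config_verts s1_centre spine_sides nbhd_sides by auto
  have "card (verts G - Z) = 2 * card Z + 1"
    using card_V card_Diff_subset[OF finite_subset[OF Z fin] Z] by simp
  moreover have "card R = 5" "card S = 4" using config_distinct by auto
  moreover have "card (verts G - Z - R) = card (verts G - Z) - card R"
    using R fin by (intro card_Diff_subset) (auto intro: finite_subset)
  moreover have "card code = card (verts G - Z - R) + card S"
    unfolding code_def using S fin by (intro card_Un_disjoint) auto
  moreover have "card R \<le> card (verts G - Z)"
    using R fin by (intro card_mono) auto
  ultimately show ?thesis using card_V by simp
qed

abbreviation trace :: "'a \<Rightarrow> 'a set" where
  "trace x \<equiv> closed_nbhd G x \<inter> code"

lemma in_trace_iff: "y \<in> trace x \<longleftrightarrow> (y = x \<or> adj G x y) \<and> y \<in> code"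
  using appended_3star_in_open_nbhd[OF star_tree] by (auto simp: closed_nbhd_def)

lemma noncentre_in_code: "y \<in> verts G \<Longrightarrow> y \<notin> Z \<Longrightarrow> y \<notin> R \<Longrightarrow> y \<in> code"
  by (simp add: code_def)

lemma centre_trace_two_noncentres:
  assumes "z \<in> Z" "z \<noteq> s2" "z \<noteq> s3"
  obtains a b where "a \<noteq> b" "a \<in> trace z" "b \<in> trace z" "a \<notin> Z" "b \<notin> Z"
proof -
  obtain a b where "a \<noteq> b" "adj G z a" "adj G z b" "a \<notin> R" "b \<notin> R"
  proof (cases "z \<in> S")
    case True
    then consider "z = s1" | "z = s4" using assms by auto
    moreover have "i1 \<noteq> q1" "i1 \<notin> R" "q1 \<notin> R" "i3 \<noteq> q4" "i3 \<notin> R" "q4 \<notin> R"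
      using config_distinct by auto
    ultimately show thesis
      using that[of i1 q1] that[of i3 q4] config_edges by cases simp_all
  qed (use off_spine_centre_nbrs_outside_R assms in blast)
  moreover have "a \<in> verts G" "a \<notin> Z" "b \<in> verts G" "b \<notin> Z"
    using calculation appended_3star_adj[OF star_tree] assms(1) by meson+
  ultimately show thesis using that in_trace_iff noncentre_in_code by meson
qed

lemma code_dominating:
  assumes "x \<in> verts G"
  shows "trace x \<noteq> {}"
proof (cases "x \<in> S \<or> x \<notin> Z \<and> x \<notin> R")
  case True
  then have "x \<in> trace x"
    using assms in_trace_iff noncentre_in_code by (auto simp: code_def)
  then show ?thesis by blast
next
  case False
  then consider "x \<in> Z" "x \<noteq> s2" "x \<noteq> s3" | "x \<in> R" by auto
  then show ?thesis
  proof cases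
    case 1
    then show ?thesis using centre_trace_two_noncentres by blast
  next
    case 2
    then have "\<exists>s \<in> S. adj G x s" using config_edges by auto
    then show ?thesis using in_trace_iff by (auto simp: code_def)
  qed
qed

lemma code_subset: "code \<subseteq> verts G"
  using config_verts by (auto simp: code_def)

lemma S_separates_R:
  assumes "u \<in> R" "v \<in> R" "u \<noteq> v"
  shows "\<exists>s\<in>S. adj G s u \<noteq> adj G s v"
proof -
  have "p1 \<in> open_nbhd G s1" "p2 \<notin> open_nbhd G s1" "i2 \<notin> open_nbhd G s1"
    "p3 \<notin> open_nbhd G s1" "p4 \<notin> open_nbhd G s1"
    "p2 \<in> open_nbhd G s2" "i2 \<in> open_nbhd G s2" "p3 \<notin> open_nbhd G s2"
    "i2 \<in> open_nbhd G s3" "p2 \<notin> open_nbhd G s3"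
    "p4 \<in> open_nbhd G s4" "p1 \<notin> open_nbhd G s4" "p2 \<notin> open_nbhd G s4"
    "i2 \<notin> open_nbhd G s4" "p3 \<notin> open_nbhd G s4"
    unfolding nbhd_s1 nbhd_s2 nbhd_s3 nbhd_s4 using config_distinct by auto
  then show ?thesis
    using assms unfolding appended_3star_in_open_nbhd[OF star_tree, symmetric]
    by (elim insertE emptyE; simp add: Bex_def; blast)
qed

lemma centre_noncentre_traces_differ:
  assumes "u \<in> Z" "v \<notin> Z"
  shows "trace u \<noteq> trace v"
proof
  assume eq: "trace u = trace v"
  have only_v: "y = v" if "y \<in> trace u" "y \<notin> Z" for y
    using appended_3star_closed_nbhd_same_side[OF star_tree] that eq assms(2) by blast
  have S_code: "S \<subseteq> code" by (auto simp: code_def)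
  have "i1 \<in> code" "i3 \<in> code"
    using config_verts spine_sides config_distinct by (auto simp: code_def)
  consider "u \<noteq> s2" "u \<noteq> s3" | "u = s2" | "u = s3" by blast
  then show False
  proof cases
    case 1
    then show False using centre_trace_two_noncentres[OF assms(1)] only_v by metis
  next
    case 2
    then have "v = i1" using only_v \<open>i1 \<in> code\<close> in_trace_iff config_edges spine_sides by blast
    then have "s1 \<in> trace u" using eq S_code in_trace_iff config_edges by auto
    then show False
      using appended_3star_closed_nbhd_same_side[OF star_tree] 2 s1_centre spine_sides
        spine_distinct by auto
  next
    case 3
    then have "v = i3" using only_v \<open>i3 \<in> code\<close> in_trace_iff config_edges spine_sides by blast
    then have "s4 \<in> trace u" using eq S_code in_trace_iff config_edges by auto
    then show False
      using appended_3star_closed_nbhd_same_side[OF star_tree] 3 spine_sides spine_distinct by auto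
  qed
qed

lemma code_separating:
  assumes "u \<in> verts G" "v \<in> verts G" "u \<noteq> v"
  shows "trace u \<noteq> trace v"
proof
  assume eq: "trace u = trace v"
  note same_side = appended_3star_closed_nbhd_same_side[OF star_tree]
  have side: "u \<in> Z \<longleftrightarrow> v \<in> Z"
    using centre_noncentre_traces_differ eq by metis
  have not_in_code: "x \<notin> code" if "x \<in> {u, v}" for x
  proof
    assume "x \<in> code"
    then have "x \<in> trace u" "x \<in> trace v" using that eq in_trace_iff by auto
    then show False using same_side side assms(3) that by auto
  qed
  then consider "u \<in> Z" "v \<in> Z" "u \<notin> S" | "u \<in> R" "v \<in> R"
    using assms(1,2) side by (auto simp: code_def)
  then show False
  proof cases
    case 1
    then obtain a b where ab: "a \<noteq> b" "a \<in> trace u" "b \<in> trace u" "a \<notin> Z" "b \<notin> Z"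
      using centre_trace_two_noncentres by blast
    moreover from ab(2,3) have "a \<in> trace v" "b \<in> trace v" by (simp_all only: eq)
    ultimately have "adj G u a" "adj G u b" "adj G v a" "adj G v b"
      using 1 in_trace_iff by metis+
    then show False
      using appended_3star_common_nbr_unique[OF star_tree assms(3)] ab(1) by blast
  next
    case 2
    then obtain s where "s \<in> S" "adj G s u \<noteq> adj G s v"
      using S_separates_R assms(3) by blast
    moreover have "s \<noteq> u" "s \<noteq> v" "s \<in> code"
      using 2 calculation(1) config_distinct by (auto simp: code_def)
    ultimately show False
      using eq in_trace_iff adj_sym by metis
  qed
qed

lemma identifying_code: "is_identifying_code G code"
  unfolding is_identifying_code_def using code_subset code_dominating code_separating by blast

end

theorem mainTheorem16:
  fixes G :: "'a graph"
  assumes "appended_star G"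
    and "max_degree G = 3"
    and "diameter G \<ge> 8"
  shows "(\<exists>C. is_identifying_code G C)
         \<and> 3 * gamma_ID G \<le> 2 * card (verts G)"
proof -
  obtain Z where tree: "appended_3star G Z"
    using appended_star_max_degree_3[OF assms(1)] assms(2) by force
  have "finite (verts G)" "verts G \<noteq> {}"
    using appended_3star_card[OF tree] by auto
  then obtain xs where "geodesic G xs" "length xs = Suc (diameter G)"
    using diametral_geodesic appended_3star_connected[OF tree] by blast
  moreover have "8 \<le> length xs" using calculation(2) assms(3) by simp
  ultimately obtain s1 i1 s2 i2 s3 i3 s4
    where "geodesic G [s1, i1, s2, i2, s3, i3, s4]" "s1 \<in> Z"
    using appended_3star_geodesic_from_centre[OF tree] by blast
  with tree interpret star_tree_spine G Z s1 i1 s2 i2 s3 i3 s4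
    by unfold_locales
  obtain p1 q1 p2 p3 p4 q4 where
    "open_nbhd G s1 = {i1, p1, q1}" "open_nbhd G s2 = {i1, i2, p2}"
    "open_nbhd G s3 = {i2, i3, p3}" "open_nbhd G s4 = {i3, p4, q4}"
    by (rule spine_nbhds)
  then interpret star_tree_spine_nbhds G Z s1 i1 s2 i2 s3 i3 s4 p1 q1 p2 p3 p4 q4
    by unfold_locales
  have "gamma_ID G \<le> card code"
    unfolding gamma_ID_def using identifying_code by (intro Least_le) blast
  then show ?thesis using identifying_code card_code by auto
qed

end
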